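(* Let $U:(0,\infty)\to\mathbb R$ be a $C^2$ function, and consider the system $\dot x=v$, $\dot v=-U'(|x|)x/|x|$ on $\mathbb R^3_0\times\mathbb R^3$ with $E(x,v)=\tfrac12|v|^2+U(|x|)$ and $L(x,v)=x\times v$. Take $(x_0,v_0)\in\mathbb R^3_0\times\mathbb R^3$ with $x_0\times v_0\ne0$, set $E_0=E(x_0,v_0)$, $L_0=L(x_0,v_0)$, and with $k_1,k_2>0$ let $V(x,v)=\tfrac{k_1}{2}|E(x,v)-E_0|^2+\tfrac{k_2}{2}|L(x,v)-L_0|^2$. Suppose $V^{-1}(0)$ is compact and there is no $r>0$ satisfying simultaneously $$E_0=\tfrac12 rU'(r)+U(r)\quad\text{and}\quad |L_0|^2=r^3U'(r).$$ Then (after restricting, if necessary, to an open neighborhood of $V^{-1}(0)$) there is $c>0$ such that $V^{-1}([0,c])$ is compact and its only critical points of $V$ are those in $V^{-1}(0)$, and every trajectory of $$\dot x = v - k_1\Delta E\,U'(|x|)\tfrac{x}{|x|} - k_2 v\times\Delta L,\qquad \dot v = -U'(|x|)\tfrac{x}{|x|} - k_1\Delta E\, v - k_2\Delta L\times x,$$ with $\Delta E=E(x,v)-E_0$, $\Delta L=L(x,v)-L_0$, starting in $V^{-1}([0,c])$ remains in $V^{-1}([0,c])$ for all $t\ge0$ and converges to $V^{-1}(0)=\{(x,v):E(x,v)=E_0,\ L(x,v)=L_0\}$ as $t\to\infty$.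
   Context: $\mathbb R^3_0=\mathbb R^3\setminus\{0\}$. *)

theory Defs
  imports "HOL-Analysis.Analysis" "HOL-Analysis.Cross3"
begin

type_synonym state = "(real^3) \<times> (real^3)"

definition energy :: "(real \<Rightarrow> real) \<Rightarrow> state \<Rightarrow> real" where
  "energy U z = (norm (snd z))\<^sup>2 / 2 + U (norm (fst z))"

definition angmom :: "state \<Rightarrow> real^3" where
  "angmom z = cross3 (fst z) (snd z)"

definition lyap :: "(real \<Rightarrow> real) \<Rightarrow> real \<Rightarrow> real \<Rightarrow> real \<Rightarrow> real^3 \<Rightarrow> state \<Rightarrow> real" where
  "lyap U k1 k2 E0 L0 z =
     k1 / 2 * (energy U z - E0)\<^sup>2 + k2 / 2 * (norm (angmom z - L0))\<^sup>2"

text \<open>The controlled vector field; dU is the derivative U'.\<close>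
definition ctrl_field ::
  "(real \<Rightarrow> real) \<Rightarrow> (real \<Rightarrow> real) \<Rightarrow> real \<Rightarrow> real \<Rightarrow> real \<Rightarrow> real^3 \<Rightarrow> state \<Rightarrow> state" where
  "ctrl_field U dU k1 k2 E0 L0 z =
     (let x = fst z; v = snd z;
          dE = energy U z - E0; dL = angmom z - L0
      in (v - (k1 * dE * dU (norm x) / norm x) *\<^sub>R x - k2 *\<^sub>R cross3 v dL,
          - (dU (norm x) / norm x) *\<^sub>R x - (k1 * dE) *\<^sub>R v - k2 *\<^sub>R cross3 dL x))"

definition phase :: "state set" where
  "phase = {z. fst z \<noteq> 0}"

end

theory Submission
  imports Defs
begin

(* The controlled field is the central-force field minus the gradient of V, and the gradient of V
   is orthogonal to the central-force field because E and L are first integrals of it; hence V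
   decreases along controlled trajectories at the rate |\<nabla>V|^2.

   The gradient of V at z is the transpose of the derivative of (E, L) applied to (k1 \<Delta>E, k2 \<Delta>L).
   On V^-1(0) this transpose fails to be injective only at a circular orbit with energy E0 and
   angular momentum L0, which is excluded; by compactness the only critical points of V in a thin
   tube around V^-1(0) are zeros of V.  A sublevel set of V inside such a tube, at a level below the
   values of V on the boundary of the tube, is compact and forward invariant.  Solutions exist for
   all time by Picard iteration for a globally Lipschitz cut-off of the field.  On the part of the
   sublevel set where V \<ge> \<eta> > 0 the gradient is bounded away from 0, so V tends to 0 along every
   trajectory, which forces convergence to V^-1(0). *)

section \<open>Bounded Lipschitz functions\<close>

definition bounded_lipschitz_on :: "'a::metric_space set \<Rightarrow> ('a \<Rightarrow> 'b::real_normed_vector) \<Rightarrow> bool" where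
  "bounded_lipschitz_on S f \<longleftrightarrow> (\<exists>L. L-lipschitz_on S f) \<and> bounded (f ` S)"

lemma bounded_lipschitz_on_const: "bounded_lipschitz_on S (\<lambda>_. c)"
  unfolding bounded_lipschitz_on_def by (auto intro: lipschitz_on_constant bounded_subset[of "{c}"])

lemma bounded_lipschitz_on_add:
  "bounded_lipschitz_on S f \<Longrightarrow> bounded_lipschitz_on S g \<Longrightarrow> bounded_lipschitz_on S (\<lambda>z. f z + g z)"
  unfolding bounded_lipschitz_on_def by (auto intro: lipschitz_on_add bounded_plus_comp)

lemma bounded_lipschitz_on_diff:
  "bounded_lipschitz_on S f \<Longrightarrow> bounded_lipschitz_on S g \<Longrightarrow> bounded_lipschitz_on S (\<lambda>z. f z - g z)"
  unfolding bounded_lipschitz_on_def by (auto intro: lipschitz_on_diff bounded_minus_comp)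

lemma bounded_lipschitz_on_minus: "bounded_lipschitz_on S f \<Longrightarrow> bounded_lipschitz_on S (\<lambda>z. - f z)"
  unfolding bounded_lipschitz_on_def
  by (auto intro: lipschitz_on_minus bounded_uminus simp: image_image[symmetric])

lemma bounded_lipschitz_on_bilinear:
  assumes p: "bounded_bilinear p" and f: "bounded_lipschitz_on S f" and g: "bounded_lipschitz_on S g"
  shows "bounded_lipschitz_on S (\<lambda>z. p (f z) (g z))"
proof -
  obtain K where K: "K > 0" "\<And>a b. norm (p a b) \<le> norm a * norm b * K"
    using bounded_bilinear.pos_bounded[OF p] by blast
  obtain Lf Lg where Lf: "Lf-lipschitz_on S f" and Lg: "Lg-lipschitz_on S g"
    using f g unfolding bounded_lipschitz_on_def by blast
  obtain Bf Bg where Bf: "\<And>x. x \<in> S \<Longrightarrow> norm (f x) \<le> Bf" and Bg: "\<And>x. x \<in> S \<Longrightarrow> norm (g x) \<le> Bg"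
    using f g unfolding bounded_lipschitz_on_def bounded_iff by (metis imageI)
  have "dist (p (f x) (g x)) (p (f y) (g y)) \<le> (K * Lf * \<bar>Bg\<bar> + K * \<bar>Bf\<bar> * Lg) * dist x y"
    if x: "x \<in> S" and y: "y \<in> S" for x y
  proof -
    have "p (f x) (g x) - p (f y) (g y) = p (f x - f y) (g x) + p (f y) (g x - g y)"
      by (simp add: bounded_bilinear.diff_left[OF p] bounded_bilinear.diff_right[OF p])
    moreover have "norm (p (f x - f y) (g x)) \<le> (Lf * dist x y) * \<bar>Bg\<bar> * K"
      using K(2)[of "f x - f y" "g x"] lipschitz_onD[OF Lf x y] Bg[OF x] K(1) lipschitz_on_nonneg[OF Lf]
      by (smt (verit, best) dist_norm mult_mono mult_right_mono norm_ge_zero)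
    moreover have "norm (p (f y) (g x - g y)) \<le> \<bar>Bf\<bar> * (Lg * dist x y) * K"
      using K(2)[of "f y" "g x - g y"] lipschitz_onD[OF Lg x y] Bf[OF y] K(1) lipschitz_on_nonneg[OF Lg]
      by (smt (verit, best) dist_norm mult_mono mult_right_mono norm_ge_zero)
    ultimately show ?thesis
      using norm_triangle_ineq[of "p (f x - f y) (g x)" "p (f y) (g x - g y)"]
      by (simp add: dist_norm algebra_simps)
  qed
  then have "(K * Lf * \<bar>Bg\<bar> + K * \<bar>Bf\<bar> * Lg)-lipschitz_on S (\<lambda>z. p (f z) (g z))"
    using K(1) lipschitz_on_nonneg[OF Lf] lipschitz_on_nonneg[OF Lg] by (intro lipschitz_onI) auto
  moreover have "norm (p (f x) (g x)) \<le> \<bar>Bf\<bar> * \<bar>Bg\<bar> * K" if "x \<in> S" for x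
    using K Bf[OF that] Bg[OF that] order_trans[OF K(2)]
    by (smt (verit, best) mult_mono mult_right_mono norm_ge_zero)
  then have "bounded ((\<lambda>z. p (f z) (g z)) ` S)"
    unfolding bounded_iff by blast
  ultimately show ?thesis
    unfolding bounded_lipschitz_on_def by blast
qed

lemma bounded_lipschitz_on_linear:
  assumes "bounded_linear f" "bounded S"
  shows "bounded_lipschitz_on S f"
  using bounded_linear.lipschitz_boundE[OF assms(1)] bounded_linear_image[OF assms(2,1)]
  unfolding bounded_lipschitz_on_def by blast

lemma bounded_lipschitz_on_compose:
  assumes g: "bounded_lipschitz_on T g" and f: "bounded_lipschitz_on S f" and "f ` S \<subseteq> T"
  shows "bounded_lipschitz_on S (\<lambda>z. g (f z))"
proof -
  obtain Lf Lg where "Lf-lipschitz_on S f" "Lg-lipschitz_on T g"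
    using f g unfolding bounded_lipschitz_on_def by blast
  then have "(Lg * Lf)-lipschitz_on S (\<lambda>z. g (f z))"
    using lipschitz_on_compose[of Lf S f Lg g] lipschitz_on_subset[of Lg T g "f ` S"] assms(3)
    by (simp add: o_def mult.commute)
  moreover have "bounded ((\<lambda>z. g (f z)) ` S)"
    by (rule bounded_subset[of "g ` T"]) (use g assms(3) bounded_lipschitz_on_def in auto)
  ultimately show ?thesis
    unfolding bounded_lipschitz_on_def by blast
qed

lemma bounded_lipschitz_on_Pair:
  assumes "bounded_lipschitz_on S f" "bounded_lipschitz_on S g"
  shows "bounded_lipschitz_on S (\<lambda>z. (f z, g z))"
proof -
  have "bounded ((\<lambda>z. (f z, g z)) ` S)"
    by (rule bounded_subset[of "f ` S \<times> g ` S"])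
       (use assms in \<open>auto simp: bounded_lipschitz_on_def intro!: bounded_Times\<close>)
  then show ?thesis
    using assms lipschitz_on_Pair unfolding bounded_lipschitz_on_def by blast
qed

lemma bounded_lipschitz_on_norm: "bounded S \<Longrightarrow> bounded_lipschitz_on S norm"
  unfolding bounded_lipschitz_on_def
  by (auto intro!: lipschitz_onI exI[of _ 1] simp: dist_norm norm_triangle_ineq3 bounded_norm_comp)

lemma bounded_lipschitz_on_real_C1:
  fixes f :: "real \<Rightarrow> real"
  assumes f': "\<And>r. r \<in> {a..b} \<Longrightarrow> (f has_real_derivative f' r) (at r)"
    and "continuous_on {a..b} f'"
  shows "bounded_lipschitz_on {a..b} f"
proof -
  obtain B where B: "\<And>r. r \<in> {a..b} \<Longrightarrow> norm (f' r) \<le> B"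
    using compact_imp_bounded[OF compact_continuous_image[OF assms(2) compact_Icc]]
    unfolding bounded_iff by (metis imageI)
  have "\<bar>B\<bar>-lipschitz_on {a..b} f"
  proof (rule bounded_derivative_imp_lipschitz[where f'="\<lambda>r h. f' r * h"])
    show "(f has_derivative (\<lambda>h. f' r * h)) (at r within {a..b})" if "r \<in> {a..b}" for r
      using f'[OF that] by (simp add: has_field_derivative_def has_derivative_at_withinI)
    show "onorm (\<lambda>h. f' r * h) \<le> \<bar>B\<bar>" if "r \<in> {a..b}" for r
      using onorm_scaleR[where f="\<lambda>x::real. x" and r="f' r"] onorm_id[where 'a=real] B[OF that]
      by simp
  qed auto
  moreover have "continuous_on {a..b} f"
    using f' by (meson DERIV_isCont continuous_at_imp_continuous_on)
  then have "bounded (f ` {a..b})"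
    by (rule compact_imp_bounded[OF compact_continuous_image[OF _ compact_Icc]])
  ultimately show ?thesis
    unfolding bounded_lipschitz_on_def by blast
qed

section \<open>Global solutions of bounded Lipschitz differential equations\<close>

lemma has_vector_derivative_integral_from_0:
  fixes h :: "real \<Rightarrow> 'a::banach"
  assumes "continuous_on UNIV h" "u \<ge> 0"
  shows "((\<lambda>t. integral {0..t} h) has_vector_derivative h u) (at u within {0..})"
proof -
  have "((\<lambda>t. integral {0..t} h) has_vector_derivative h u) (at u within {0..u+1})"
    by (rule integral_has_vector_derivative) (auto intro: continuous_on_subset[OF assms(1)] simp: assms)
  moreover have "at u within {0..u+1} = at u within {0..}"
    by (rule at_within_nhd[where S="{..<u+1}"]) auto
  ultimately show ?thesis
    by simp
qed

lemma continuous_on_integral_from_0: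
  fixes h :: "real \<Rightarrow> 'a::banach"
  assumes "continuous_on UNIV h"
  shows "continuous_on UNIV (\<lambda>t. integral {0..t} h)"
proof -
  have "continuous_on {0..} (\<lambda>t. integral {0..t} h)"
    using has_vector_derivative_continuous[OF has_vector_derivative_integral_from_0[OF assms]]
    by (auto simp: continuous_on_eq_continuous_within)
  then have "continuous_on UNIV ((\<lambda>t. integral {0..t} h) \<circ> (\<lambda>t. max 0 t))"
    by (intro continuous_on_compose continuous_intros) (auto elim: continuous_on_subset)
  moreover have "(\<lambda>t. integral {0..t} h) \<circ> (\<lambda>t. max 0 t) = (\<lambda>t. integral {0..t} h)"
    by (auto simp: fun_eq_iff max_def)
  ultimately show ?thesis
    by simp
qed

lemma norm_integral_from_0_le:
  fixes h :: "real \<Rightarrow> 'a::banach"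
  assumes "continuous_on UNIV h" "\<And>s. norm (h s) \<le> M"
  shows "norm (integral {0..t} h) \<le> M * max 0 t"
proof (cases "t \<ge> 0")
  case True
  have "h integrable_on cbox 0 t"
    by (auto intro!: integrable_continuous_real continuous_on_subset[OF assms(1)])
  then show ?thesis
    using True integrable_bound[of M h 0 t] assms(2) order_trans[OF norm_ge_zero assms(2)] by simp
qed simp

lemma affine_le_exp_weight:
  fixes a M K T :: real
  assumes "a \<ge> 0" "M \<ge> 0" "K > 0" "T \<ge> 0"
  shows "(a + M * T) / exp (2 * K * T) \<le> a + M / (2 * K)"
proof -
  have "2 * K * T \<le> exp (2 * K * T)"
    using exp_ge_add_one_self[of "2 * K * T"] by linarith
  then have "M * T \<le> M * (exp (2 * K * T) / (2 * K))"
    using assms by (intro mult_left_mono) (simp_all add: field_simps)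
  then have "M * T / exp (2 * K * T) \<le> M / (2 * K)"
    by (simp add: divide_simps)
  moreover have "a / exp (2 * K * T) \<le> a / 1"
    using assms by (intro divide_left_mono) auto
  ultimately show ?thesis
    by (simp add: add_divide_distrib)
qed

lemma norm_integral_diff_le_exp:
  fixes h1 h2 :: "real \<Rightarrow> 'a::banach"
  assumes "continuous_on UNIV h1" "continuous_on UNIV h2" "t \<ge> 0" "K > 0"
    and "\<And>s. s \<in> {0..t} \<Longrightarrow> norm (h1 s - h2 s) \<le> D * K * exp (2 * K * s)"
  shows "norm (integral {0..t} h1 - integral {0..t} h2) \<le> D * exp (2 * K * t) / 2 - D / 2"
proof -
  have int: "h integrable_on {0..t}" if "continuous_on UNIV h" for h :: "real \<Rightarrow> 'a"
    by (rule integrable_continuous_real) (auto intro: continuous_on_subset[OF that])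
  have "((\<lambda>s. D * K * exp (2 * K * s)) has_integral
      (D * exp (2 * K * t) / 2 - D * exp (2 * K * 0) / 2)) {0..t}"
    by (rule fundamental_theorem_of_calculus[OF assms(3)])
       (auto intro!: derivative_eq_intros
         simp: has_real_derivative_iff_has_vector_derivative[symmetric] field_simps)
  then have exp: "((\<lambda>s. D * K * exp (2 * K * s)) has_integral (D * exp (2 * K * t) / 2 - D / 2)) {0..t}"
    by simp
  have "norm (integral {0..t} h1 - integral {0..t} h2) = norm (integral {0..t} (\<lambda>s. h1 s - h2 s))"
    using integral_diff[OF int int] assms(1,2) by simp
  also have "\<dots> \<le> integral {0..t} (\<lambda>s. D * K * exp (2 * K * s))"
    using assms(1,2,5) exp by (intro integral_norm_bound_integral int continuous_intros) auto
  also have "\<dots> = D * exp (2 * K * t) / 2 - D / 2"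
    using integral_unique[OF exp] .
  finally show ?thesis .
qed

definition exp_weight :: "real \<Rightarrow> real \<Rightarrow> real" where
  "exp_weight K t = exp (2 * K * max 0 t)"

(* The Picard operator conjugated by the weight, so that a fixed point \<psi> gives the solution
   z t = exp_weight K t *\<^sub>R \<psi> t.  Bielecki's weight makes it a contraction in the sup-norm on
   the whole half-line at once. *)
definition bielecki_picard ::
  "real \<Rightarrow> ('a::banach \<Rightarrow> 'a) \<Rightarrow> 'a \<Rightarrow> (real, 'a) bcontfun \<Rightarrow> real \<Rightarrow> 'a" where
  "bielecki_picard K G z0 \<psi> t =
     (1 / exp_weight K t) *\<^sub>R (z0 + integral {0..t} (\<lambda>s. G (exp_weight K s *\<^sub>R apply_bcontfun \<psi> s)))"

lemma exp_weight_ge_1: "K \<ge> 0 \<Longrightarrow> exp_weight K t \<ge> 1"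
  by (simp add: exp_weight_def)

lemma continuous_on_exp_weight: "continuous_on UNIV (exp_weight K)"
  unfolding exp_weight_def by (intro continuous_intros)

lemma continuous_on_bielecki_integrand:
  fixes G :: "'a::banach \<Rightarrow> 'a"
  assumes "continuous_on UNIV G"
  shows "continuous_on UNIV (\<lambda>s. G (exp_weight K s *\<^sub>R apply_bcontfun \<psi> s))"
  by (rule continuous_on_compose2[OF assms], intro continuous_intros continuous_on_exp_weight) auto

lemma bielecki_picard_bcontfun:
  fixes G :: "'a::banach \<Rightarrow> 'a"
  assumes "continuous_on UNIV G" "\<And>z. norm (G z) \<le> M" "K > 0"
  shows "bielecki_picard K G z0 \<psi> \<in> bcontfun"
proof -
  note integrand = continuous_on_bielecki_integrand[OF assms(1), of K \<psi>]
  have "continuous_on UNIV (bielecki_picard K G z0 \<psi>)"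
    unfolding bielecki_picard_def
    by (intro continuous_intros continuous_on_integral_from_0 integrand continuous_on_exp_weight)
       (simp add: exp_weight_def)
  moreover have "norm (bielecki_picard K G z0 \<psi> t) \<le> norm z0 + M / (2 * K)" for t
  proof -
    have "norm (z0 + integral {0..t} (\<lambda>s. G (exp_weight K s *\<^sub>R apply_bcontfun \<psi> s)))
        \<le> norm z0 + M * max 0 t"
      using norm_integral_from_0_le[OF integrand assms(2)] by (rule norm_triangle_mono[OF order_refl])
    then have "norm (bielecki_picard K G z0 \<psi> t) \<le> (norm z0 + M * max 0 t) / exp_weight K t"
      unfolding bielecki_picard_def using exp_weight_ge_1[of K t] assms(3)
      by (simp add: divide_right_mono)
    also have "\<dots> \<le> norm z0 + M / (2 * K)"
      unfolding exp_weight_def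
      using affine_le_exp_weight assms(3) order_trans[OF norm_ge_zero assms(2)] by simp
    finally show ?thesis .
  qed
  ultimately show ?thesis
    unfolding bcontfun_def by (auto intro!: boundedI)
qed

lemma bielecki_picard_contraction:
  fixes G :: "'a::banach \<Rightarrow> 'a"
  assumes lip: "K-lipschitz_on UNIV G" and "K > 0"
  shows "dist (bielecki_picard K G z0 \<psi>1 t) (bielecki_picard K G z0 \<psi>2 t) \<le> dist \<psi>1 \<psi>2 / 2"
proof (cases "t \<ge> 0")
  case True
  define D where "D = dist \<psi>1 \<psi>2"
  define h where "h \<psi> s = G (exp_weight K s *\<^sub>R apply_bcontfun \<psi> s)" for \<psi> s
  have h_cont: "continuous_on UNIV (h \<psi>)" for \<psi>
    unfolding h_def[abs_def] by (rule continuous_on_bielecki_integrand[OF lipschitz_on_continuous_on[OF lip]])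
  have bound: "norm (h \<psi>1 s - h \<psi>2 s) \<le> D * K * exp (2 * K * s)" if "s \<in> {0..t}" for s
  proof -
    have "norm (h \<psi>1 s - h \<psi>2 s)
        \<le> K * dist (exp_weight K s *\<^sub>R apply_bcontfun \<psi>1 s) (exp_weight K s *\<^sub>R apply_bcontfun \<psi>2 s)"
      unfolding h_def using lipschitz_onD[OF lip] by (simp add: dist_norm)
    also have "\<dots> = K * (exp_weight K s * dist (apply_bcontfun \<psi>1 s) (apply_bcontfun \<psi>2 s))"
      using exp_weight_ge_1[of K s] \<open>K > 0\<close> by (simp add: dist_norm scaleR_diff_right[symmetric])
    also have "\<dots> \<le> K * (exp_weight K s * D)"
      using dist_bounded[of \<psi>1 s \<psi>2] \<open>K > 0\<close> exp_weight_ge_1[of K s] unfolding D_def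
      by (intro mult_left_mono) auto
    finally show ?thesis
      using that unfolding exp_weight_def by (simp add: algebra_simps)
  qed
  have "norm (integral {0..t} (h \<psi>1) - integral {0..t} (h \<psi>2)) \<le> D * exp (2 * K * t) / 2 - D / 2"
    by (rule norm_integral_diff_le_exp[OF h_cont h_cont True \<open>K > 0\<close> bound])
  then have "dist (bielecki_picard K G z0 \<psi>1 t) (bielecki_picard K G z0 \<psi>2 t)
      \<le> (D * exp (2 * K * t) / 2 - D / 2) / exp_weight K t"
    unfolding bielecki_picard_def dist_norm h_def[symmetric] using exp_weight_ge_1[of K t] \<open>K > 0\<close>
    by (simp add: scaleR_diff_right[symmetric] divide_right_mono)
  also have "\<dots> \<le> D / 2"
    using True unfolding exp_weight_def D_def by (simp add: field_simps)
  finally show ?thesis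
    unfolding D_def .
qed (simp add: bielecki_picard_def exp_weight_def)

lemma lipschitz_bounded_ode_solution:
  fixes G :: "'a::banach \<Rightarrow> 'a"
  assumes lip: "L-lipschitz_on UNIV G" and bnd: "\<And>z. norm (G z) \<le> M"
  obtains z where "z 0 = z0" "\<And>t. t \<ge> 0 \<Longrightarrow> (z has_vector_derivative G (z t)) (at t within {0..})"
proof -
  define K where "K = L + 1"
  have "K > 0"
    using lipschitz_on_nonneg[OF lip] by (simp add: K_def)
  have lipK: "K-lipschitz_on UNIV G"
    by (rule lipschitz_on_mono[OF lip]) (auto simp: K_def)
  note G_cont = lipschitz_on_continuous_on[OF lip]
  have P: "apply_bcontfun (Bcontfun (bielecki_picard K G z0 \<psi>)) = bielecki_picard K G z0 \<psi>" for \<psi>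
    using Bcontfun_inverse[OF bielecki_picard_bcontfun[OF G_cont bnd \<open>K > 0\<close>]] .
  have "dist (Bcontfun (bielecki_picard K G z0 \<psi>1)) (Bcontfun (bielecki_picard K G z0 \<psi>2))
      \<le> 1/2 * dist \<psi>1 \<psi>2" for \<psi>1 \<psi>2
    by (rule dist_bound) (use bielecki_picard_contraction[OF lipK \<open>K > 0\<close>] in \<open>simp add: P\<close>)
  then obtain \<psi> where "Bcontfun (bielecki_picard K G z0 \<psi>) = \<psi>"
    using banach_fix_type[of "1/2" "\<lambda>\<psi>. Bcontfun (bielecki_picard K G z0 \<psi>)"] by auto
  then have \<psi>: "apply_bcontfun \<psi> t = bielecki_picard K G z0 \<psi> t" for t
    using P by metis
  define z where "z t = exp_weight K t *\<^sub>R apply_bcontfun \<psi> t" for t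
  have G_z: "(\<lambda>s. G (exp_weight K s *\<^sub>R apply_bcontfun \<psi> s)) = (\<lambda>s. G (z s))"
    by (simp add: z_def)
  have z: "z t = z0 + integral {0..t} (\<lambda>s. G (z s))" if "t \<ge> 0" for t
  proof -
    have "z t = exp_weight K t *\<^sub>R bielecki_picard K G z0 \<psi> t"
      by (simp only: z_def \<psi>)
    then show ?thesis
      unfolding bielecki_picard_def G_z using exp_weight_ge_1[of K t] \<open>K > 0\<close> by simp
  qed
  show thesis
  proof
    show "z 0 = z0"
      using z[of 0] by simp
    fix t :: real
    assume "t \<ge> 0"
    have "((\<lambda>t. z0 + integral {0..t} (\<lambda>s. G (z s))) has_vector_derivative G (z t)) (at t within {0..})"
      using has_vector_derivative_integral_from_0[OF
          continuous_on_bielecki_integrand[OF G_cont, of K \<psi>, unfolded G_z] \<open>t \<ge> 0\<close>]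
      by (auto intro!: derivative_eq_intros)
    then show "(z has_vector_derivative G (z t)) (at t within {0..})"
      by (rule has_vector_derivative_transform_within[where d=1]) (auto simp: \<open>t \<ge> 0\<close> z)
  qed
qed

section \<open>Lyapunov functions and trapping regions\<close>

lemma has_real_derivative_nonpos_imp_decreasing_within:
  fixes f f' :: "real \<Rightarrow> real"
  assumes "a \<le> b" "{a..b} \<subseteq> S"
    and f': "\<And>t. t \<in> {a..b} \<Longrightarrow> (f has_real_derivative f' t) (at t within S)"
    and "\<And>t. t \<in> {a..b} \<Longrightarrow> f' t \<le> 0"
  shows "f b \<le> f a"
proof (rule DERIV_nonpos_imp_decreasing_open[OF assms(1)])
  fix x
  assume x: "a < x" "x < b"
  then have "(f has_real_derivative f' x) (at x within {a<..<b})"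
    using assms(2) by (intro DERIV_subset[OF f']) auto
  then show "\<exists>y. (f has_real_derivative y) (at x) \<and> y \<le> 0"
    using x assms(4)[of x] at_within_open[of x "{a<..<b}"] by auto
next
  show "continuous_on {a..b} f"
    unfolding continuous_on_eq_continuous_within
    using DERIV_continuous[OF f'] continuous_within_subset[OF _ assms(2)] by blast
qed

lemma compact_pos_lower_bound:
  fixes g :: "'a::topological_space \<Rightarrow> real"
  assumes "compact S" "continuous_on S g" "\<And>x. x \<in> S \<Longrightarrow> g x > 0"
  obtains c where "c > 0" "\<And>x. x \<in> S \<Longrightarrow> c < g x"
proof (cases "S = {}")
  case False
  obtain x0 where "x0 \<in> S" "\<And>y. y \<in> S \<Longrightarrow> g x0 \<le> g y"
    using continuous_attains_inf[OF assms(1) False assms(2)] by blast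
  then show thesis
    using that[of "g x0 / 2"] assms(3) by force
qed (use that[of 1] in auto)

lemma has_real_derivative_along_trajectory:
  assumes "(V has_derivative (\<lambda>h. g \<bullet> h)) (at (z t))" "(z has_vector_derivative v) (at t within S)"
  shows "((\<lambda>s. V (z s)) has_real_derivative g \<bullet> v) (at t within S)"
  unfolding has_field_derivative_def
  by (rule has_derivative_eq_rhs[OF has_derivative_compose[OF assms(2)[unfolded has_vector_derivative_def]
        assms(1)]]) (simp add: fun_eq_iff)

lemma trapping_region_locally_invariant:
  fixes V d :: "'a::real_inner \<Rightarrow> real" and z :: "real \<Rightarrow> 'a" and \<rho> c :: real
  defines "K \<equiv> {x. d x \<le> \<rho> \<and> V x \<le> c}"
  assumes d: "continuous_on UNIV d" and boundary: "\<And>x. d x = \<rho> \<Longrightarrow> c < V x"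
    and W: "open W" "K \<subseteq> W"
    and V': "\<And>x. x \<in> W \<Longrightarrow> (V has_derivative (\<lambda>h. g x \<bullet> h)) (at x)"
    and descent: "\<And>x. x \<in> W \<Longrightarrow> g x \<bullet> F x \<le> 0"
    and z: "continuous_on {0..} z"
      "\<And>t. t \<ge> 0 \<Longrightarrow> z t \<in> W \<Longrightarrow> (z has_vector_derivative F (z t)) (at t within {0..})"
    and s: "s \<ge> 0" "z s \<in> K"
  obtains \<delta> where "\<delta> > 0" "\<And>t. s \<le> t \<Longrightarrow> t < s + \<delta> \<Longrightarrow> z t \<in> K"
proof -
  obtain e where "e > 0" and e: "ball (z s) e \<subseteq> W"
    using W s(2) open_contains_ball by blast
  then obtain \<delta> where "\<delta> > 0" and \<delta>': "\<And>t. t \<in> {0..} \<Longrightarrow> dist t s < \<delta> \<Longrightarrow> dist (z t) (z s) < e"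
    using z(1) s(1) unfolding continuous_on_iff by (metis atLeast_iff)
  have \<delta>: "z t \<in> W" if "s \<le> t" "t < s + \<delta>" for t
    using \<delta>'[of t] e that s(1) by (auto simp: dist_real_def dist_commute)
  have V_le: "V (z t) \<le> V (z s)" if "s \<le> t" "t < s + \<delta>" for t
    using that s(1) \<delta> V' descent z(2)
    by (intro has_real_derivative_nonpos_imp_decreasing_within[of s t "{0..}" _ "\<lambda>u. g (z u) \<bullet> F (z u)"]
        has_real_derivative_along_trajectory) auto
  have "z t \<in> K" if st: "s \<le> t" "t < s + \<delta>" for t
  proof -
    have "d (z t) \<le> \<rho>"
    proof (rule ccontr)
      assume "\<not> d (z t) \<le> \<rho>"
      moreover have "d (z s) \<le> \<rho>" "continuous_on {s..t} (\<lambda>u. d (z u))"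
        using s st by (auto intro!: continuous_on_compose2[OF d] continuous_on_subset[OF z(1)]
            simp: K_def)
      ultimately obtain u where "s \<le> u" "u \<le> t" "d (z u) = \<rho>"
        using IVT'[of "\<lambda>u. d (z u)" s \<rho> t] st by auto
      then show False
        using boundary[of "z u"] V_le[of u] st s(2) by (auto simp: K_def)
    qed
    then show ?thesis
      using V_le[OF st] s(2) by (auto simp: K_def)
  qed
  with \<open>\<delta> > 0\<close> show thesis
    using that by blast
qed

lemma trapping_region_invariant:
  fixes V d :: "'a::real_inner \<Rightarrow> real" and z :: "real \<Rightarrow> 'a" and \<rho> c :: real
  defines "K \<equiv> {x. d x \<le> \<rho> \<and> V x \<le> c}"
  assumes d: "continuous_on UNIV d" and "closed K" and boundary: "\<And>x. d x = \<rho> \<Longrightarrow> c < V x"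
    and W: "open W" "K \<subseteq> W"
    and V': "\<And>x. x \<in> W \<Longrightarrow> (V has_derivative (\<lambda>h. g x \<bullet> h)) (at x)"
    and descent: "\<And>x. x \<in> W \<Longrightarrow> g x \<bullet> F x \<le> 0"
    and z: "continuous_on {0..} z"
      "\<And>t. t \<ge> 0 \<Longrightarrow> z t \<in> W \<Longrightarrow> (z has_vector_derivative F (z t)) (at t within {0..})"
    and "z 0 \<in> K" "t \<ge> 0"
  shows "z t \<in> K"
proof (rule ccontr)
  assume "z t \<notin> K"
  define T where "T = {u \<in> {0..t}. z u \<notin> K}"
  define s where "s = Inf T"
  have "T \<noteq> {}" "bdd_below T"
    using \<open>z t \<notin> K\<close> \<open>t \<ge> 0\<close> by (auto simp: T_def intro: bdd_belowI[of _ 0])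
  have "s \<ge> 0"
    unfolding s_def by (rule cInf_greatest[OF \<open>T \<noteq> {}\<close>]) (simp add: T_def)
  have "s \<le> t"
    unfolding s_def by (rule cInf_lower[OF _ \<open>bdd_below T\<close>]) (use \<open>z t \<notin> K\<close> \<open>t \<ge> 0\<close> in \<open>simp add: T_def\<close>)
  have before: "z u \<in> K" if "0 \<le> u" "u < s" for u
  proof (rule ccontr)
    assume "z u \<notin> K"
    then have "u \<in> T"
      using that \<open>s \<le> t\<close> by (simp add: T_def)
    then have "s \<le> u"
      unfolding s_def by (rule cInf_lower[OF _ \<open>bdd_below T\<close>])
    then show False
      using that by simp
  qed
  have "z s \<in> K"
  proof (cases "s = 0")
    case False
    have "closed ({0..s} \<inter> z -` K)"
      by (rule continuous_closed_preimage[OF continuous_on_subset[OF z(1)] closed_atLeastAtMost \<open>closed K\<close>])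
         auto
    moreover have "{0..<s} \<subseteq> {0..s} \<inter> z -` K"
      using before by auto
    ultimately have "closure {0..<s} \<subseteq> z -` K"
      using closure_minimal by blast
    then show ?thesis
      using False \<open>s \<ge> 0\<close> by auto
  qed (use \<open>z 0 \<in> K\<close> in simp)
  then obtain \<delta> where "\<delta> > 0" and \<delta>: "\<And>u. s \<le> u \<Longrightarrow> u < s + \<delta> \<Longrightarrow> z u \<in> K"
    using trapping_region_locally_invariant[OF d boundary W(1) W(2)[unfolded K_def] V' descent z
        \<open>s \<ge> 0\<close> \<open>z s \<in> K\<close>[unfolded K_def]]
    unfolding K_def by blast
  obtain u where "u \<in> T" "u < s + \<delta>"
    using cInf_less_iff[OF \<open>T \<noteq> {}\<close> \<open>bdd_below T\<close>, of "s + \<delta>"] \<open>\<delta> > 0\<close> by (auto simp: s_def)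
  moreover have "s \<le> u"
    using cInf_lower[OF \<open>u \<in> T\<close> \<open>bdd_below T\<close>] by (simp add: s_def)
  ultimately show False
    using \<delta> by (auto simp: T_def)
qed

lemma lyapunov_eventually_below:
  fixes V :: "'a::metric_space \<Rightarrow> real" and g :: "'a \<Rightarrow> 'b::real_normed_vector"
  assumes "compact K" "continuous_on K V" "continuous_on K g"
    and crit: "\<And>x. x \<in> K \<Longrightarrow> g x = 0 \<Longrightarrow> V x = 0"
    and z: "\<And>t. t \<ge> 0 \<Longrightarrow> z t \<in> K"
      "\<And>t. t \<ge> 0 \<Longrightarrow> ((\<lambda>s. V (z s)) has_real_derivative - (norm (g (z t)))\<^sup>2) (at t within {0..})"
    and "\<eta> > 0"
  obtains T where "T \<ge> 0" "V (z T) < \<eta>"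
proof -
  have "\<exists>T\<ge>0. V (z T) < \<eta>"
  proof (rule ccontr)
  assume "\<not> (\<exists>T\<ge>0. V (z T) < \<eta>)"
  then have big: "\<eta> \<le> V (z t)" if "t \<ge> 0" for t
    using that by (simp add: not_less)
  define Q where "Q = {x \<in> K. \<eta> \<le> V x}"
  have "closed Q"
    unfolding Q_def
    by (rule continuous_on_closed_Collect_le[OF continuous_on_const assms(2) compact_imp_closed[OF assms(1)]])
  moreover have "Q = K \<inter> Q"
    by (auto simp: Q_def)
  ultimately have Q: "compact Q"
    using compact_Int_closed[OF assms(1)] by metis
  have cont: "continuous_on Q (\<lambda>x. (norm (g x))\<^sup>2)"
    by (intro continuous_intros) (rule continuous_on_subset[OF assms(3)], auto simp: Q_def)
  have pos: "(norm (g x))\<^sup>2 > 0" if "x \<in> Q" for x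
    using crit[of x] that \<open>\<eta> > 0\<close> by (auto simp: Q_def)
  obtain m where "m > 0" and m: "\<And>x. x \<in> Q \<Longrightarrow> m < (norm (g x))\<^sup>2"
    using compact_pos_lower_bound[OF Q cont pos] by blast
  define t where "t = \<bar>V (z 0) - \<eta>\<bar> / m + 1"
  have "t \<ge> 0"
    using \<open>m > 0\<close> by (simp add: t_def)
  have "V (z t) + m * t \<le> V (z 0) + m * 0"
  proof (rule has_real_derivative_nonpos_imp_decreasing_within[OF \<open>t \<ge> 0\<close> order_refl])
    fix u
    assume u: "u \<in> {0..t}"
    have "((\<lambda>s. V (z s)) has_real_derivative - (norm (g (z u)))\<^sup>2) (at u within {0..t})"
      by (rule DERIV_subset[OF z(2)]) (use u in auto)
    then show "((\<lambda>s. V (z s) + m * s) has_real_derivative - (norm (g (z u)))\<^sup>2 + m) (at u within {0..t})"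
      by (auto intro!: derivative_eq_intros)
    show "- (norm (g (z u)))\<^sup>2 + m \<le> 0"
      using m[of "z u"] z(1)[of u] big[of u] u by (simp add: Q_def)
  qed
  moreover have "V (z 0) - m * t < \<eta>"
    using \<open>m > 0\<close> by (simp add: t_def algebra_simps)
  ultimately show False
    using big[OF \<open>t \<ge> 0\<close>] by simp
  qed
  then show thesis
    using that by blast
qed

lemma lyapunov_convergence:
  fixes V :: "'a::metric_space \<Rightarrow> real" and g :: "'a \<Rightarrow> 'b::real_normed_vector"
  assumes K: "compact K" "continuous_on K V" "continuous_on K g"
    and "\<And>x. x \<in> K \<Longrightarrow> V x \<ge> 0"
    and zero: "\<And>x. x \<in> K \<Longrightarrow> V x = 0 \<Longrightarrow> x \<in> Z"
    and crit: "\<And>x. x \<in> K \<Longrightarrow> g x = 0 \<Longrightarrow> V x = 0"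
    and z: "\<And>t. t \<ge> 0 \<Longrightarrow> z t \<in> K"
      "\<And>t. t \<ge> 0 \<Longrightarrow> ((\<lambda>s. V (z s)) has_real_derivative - (norm (g (z t)))\<^sup>2) (at t within {0..})"
  shows "((\<lambda>t. infdist (z t) Z) \<longlongrightarrow> 0) at_top"
  unfolding tendsto_iff eventually_at_top_linorder
proof (intro allI impI)
  fix \<epsilon> :: real
  assume "\<epsilon> > 0"
  define Q where "Q = {x \<in> K. \<epsilon> \<le> infdist x Z}"
  have "closed Q"
    unfolding Q_def
    by (rule continuous_on_closed_Collect_le[OF continuous_on_const _ compact_imp_closed[OF K(1)]])
       (intro continuous_intros)
  moreover have "Q = K \<inter> Q"
    by (auto simp: Q_def)
  ultimately have Q: "compact Q"
    using compact_Int_closed[OF K(1)] by metis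
  have cont: "continuous_on Q V"
    by (rule continuous_on_subset[OF K(2)]) (auto simp: Q_def)
  have pos: "V x > 0" if "x \<in> Q" for x
    using assms(4)[of x] zero[of x] that \<open>\<epsilon> > 0\<close> by (force simp: Q_def)
  obtain \<eta> where "\<eta> > 0" and \<eta>: "\<And>x. x \<in> Q \<Longrightarrow> \<eta> < V x"
    using compact_pos_lower_bound[OF Q cont pos] by blast
  obtain T where "T \<ge> 0" "V (z T) < \<eta>"
    using lyapunov_eventually_below[OF K crit z \<open>\<eta> > 0\<close>] by blast
  have "dist (infdist (z t) Z) 0 < \<epsilon>" if "t \<ge> T" for t
  proof -
    have "V (z t) \<le> V (z T)"
      using \<open>T \<ge> 0\<close> that z(2)
      by (intro has_real_derivative_nonpos_imp_decreasing_within[of T t "{0..}" _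
            "\<lambda>s. - (norm (g (z s)))\<^sup>2"]) auto
    then have "z t \<notin> Q"
      using \<eta>[of "z t"] \<open>V (z T) < \<eta>\<close> by linarith
    then show ?thesis
      using z(1)[of t] that \<open>T \<ge> 0\<close> by (simp add: Q_def infdist_nonneg)
  qed
  then show "\<exists>T. \<forall>t\<ge>T. dist (infdist (z t) Z) 0 < \<epsilon>"
    by blast
qed

lemma trapping_level_exists:
  fixes V :: "'a::heine_borel \<Rightarrow> real"
  assumes Z: "compact Z" "Z \<noteq> {}" and "\<rho> > 0"
    and V: "continuous_on {x. infdist x Z \<le> \<rho>} V"
      "\<And>x. infdist x Z \<le> \<rho> \<Longrightarrow> V x \<ge> 0"
      "\<And>x. infdist x Z \<le> \<rho> \<Longrightarrow> V x = 0 \<Longrightarrow> x \<in> Z"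
  obtains c where "c > 0" "\<And>x. infdist x Z = \<rho> \<Longrightarrow> c < V x"
    "compact {x. infdist x Z \<le> \<rho> \<and> V x \<le> c}"
proof -
  have tube: "compact {x. infdist x Z \<le> \<rho>}"
    by (rule compact_infdist_le[OF Z(2,1) \<open>\<rho> > 0\<close>])
  define S where "S = {x. infdist x Z \<le> \<rho>} \<inter> {x. \<rho> \<le> infdist x Z}"
  have S: "compact S"
    unfolding S_def by (intro compact_Int_closed tube closed_Collect_le continuous_intros)
  have cont: "continuous_on S V"
    by (rule continuous_on_subset[OF V(1)]) (auto simp: S_def)
  have pos: "V x > 0" if "x \<in> S" for x
    using V(2,3)[of x] that \<open>\<rho> > 0\<close> by (force simp: S_def)
  obtain c where "c > 0" and c: "\<And>x. x \<in> S \<Longrightarrow> c < V x"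
    using compact_pos_lower_bound[OF S cont pos] by blast
  have "closed {x \<in> {x. infdist x Z \<le> \<rho>}. V x \<le> c}"
    by (rule continuous_on_closed_Collect_le[OF V(1) continuous_on_const compact_imp_closed[OF tube]])
  from compact_Int_closed[OF tube this]
  have "compact {x. infdist x Z \<le> \<rho> \<and> V x \<le> c}"
    by (simp add: Collect_conj_eq Int_absorb)
  moreover have "c < V x" if "infdist x Z = \<rho>" for x
    using c[of x] that by (simp add: S_def)
  ultimately show thesis
    using that \<open>c > 0\<close> by blast
qed

lemma lipschitz_on_cutoff:
  fixes F :: "'a::metric_space \<Rightarrow> 'b::real_normed_vector"
  assumes F: "L-lipschitz_on A F" "\<And>x. x \<in> A \<Longrightarrow> norm (F x) \<le> M" "M \<ge> 0"
    and p: "Lp-lipschitz_on UNIV p" "\<And>x. x \<notin> A \<Longrightarrow> p x = 0" "\<And>x. 0 \<le> p x \<and> p x \<le> 1"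
  shows "(L + Lp * M)-lipschitz_on UNIV (\<lambda>x. p x *\<^sub>R F x)"
proof (rule lipschitz_onI)
  have "L \<ge> 0" "Lp \<ge> 0"
    using lipschitz_on_nonneg F(1) p(1) by blast+
  then show "0 \<le> L + Lp * M"
    using F(3) by simp
  have one_side: "dist (p x *\<^sub>R F x) (p y *\<^sub>R F y) \<le> (L + Lp * M) * dist x y" if "x \<in> A" for x y
  proof -
    have "norm ((p x - p y) *\<^sub>R F x) \<le> (Lp * dist x y) * M"
      using lipschitz_onD[OF p(1), of x y] F(2)[OF that]
      by (simp add: dist_real_def mult_mono \<open>Lp \<ge> 0\<close>)
    moreover have "norm (p y *\<^sub>R (F x - F y)) \<le> L * dist x y"
    proof (cases "y \<in> A")
      case True
      then show ?thesis
        using p(3)[of y] lipschitz_onD[OF F(1) that True]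
        by (simp add: dist_norm) (meson mult_left_le_one_le norm_ge_zero order_trans)
    qed (simp add: p(2) \<open>L \<ge> 0\<close>)
    moreover have "p x *\<^sub>R F x - p y *\<^sub>R F y = (p x - p y) *\<^sub>R F x + p y *\<^sub>R (F x - F y)"
      by (simp add: algebra_simps)
    ultimately show ?thesis
      unfolding dist_norm using norm_triangle_mono by (fastforce simp: algebra_simps)
  qed
  fix x y
  consider "x \<in> A" | "y \<in> A" | "x \<notin> A" "y \<notin> A"
    by blast
  then show "dist (p x *\<^sub>R F x) (p y *\<^sub>R F y) \<le> (L + Lp * M) * dist x y"
    by cases (use one_side[of x y] one_side[of y x] p(2) \<open>L \<ge> 0\<close> \<open>Lp \<ge> 0\<close> F(3)
        in \<open>auto simp: dist_commute\<close>)
qed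

lemma lipschitz_on_infdist_ramp:
  assumes "r1 < r2"
  shows "(1 / (r2 - r1))-lipschitz_on UNIV (\<lambda>x. max 0 (min 1 ((r2 - infdist x Z) / (r2 - r1))))"
proof (rule lipschitz_onI)
  fix x y
  have "\<bar>max 0 (min 1 ((r2 - infdist x Z) / (r2 - r1))) - max 0 (min 1 ((r2 - infdist y Z) / (r2 - r1)))\<bar>
      \<le> \<bar>(r2 - infdist x Z) / (r2 - r1) - (r2 - infdist y Z) / (r2 - r1)\<bar>"
    by (auto simp: max_def min_def abs_if)
  also have "\<dots> = \<bar>infdist x Z - infdist y Z\<bar> / (r2 - r1)"
    using assms by (simp add: diff_divide_distrib[symmetric] abs_minus_commute)
  also have "\<dots> \<le> dist x y / (r2 - r1)"
    using assms infdist_triangle_abs[of x Z y] by (simp add: divide_right_mono)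
  finally show "dist (max 0 (min 1 ((r2 - infdist x Z) / (r2 - r1))))
      (max 0 (min 1 ((r2 - infdist y Z) / (r2 - r1)))) \<le> 1 / (r2 - r1) * dist x y"
    by (simp add: dist_real_def)
qed (use assms in simp)

lemma cutoff_near_set:
  fixes F :: "'a::metric_space \<Rightarrow> 'b::real_normed_vector"
  assumes "L-lipschitz_on A F" "\<And>x. x \<in> A \<Longrightarrow> norm (F x) \<le> M" "M \<ge> 0"
    and "{x. infdist x Z \<le> r2} \<subseteq> A" "r1 < r2"
  obtains L' G where "L'-lipschitz_on UNIV G" "\<And>x. norm (G x) \<le> M" "\<And>x. infdist x Z < r1 \<Longrightarrow> G x = F x"
proof
  define p where "p x = max 0 (min 1 ((r2 - infdist x Z) / (r2 - r1)))" for x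
  have p0: "p x = 0" if "x \<notin> A" for x
  proof -
    have "infdist x Z > r2"
      using that assms(4) by force
    then have "(r2 - infdist x Z) / (r2 - r1) \<le> 0"
      using assms(5) by (simp add: divide_nonpos_pos)
    then show ?thesis
      by (simp add: p_def)
  qed
  have p01: "0 \<le> p x \<and> p x \<le> 1" for x
    by (simp add: p_def)
  have ramp: "(1 / (r2 - r1))-lipschitz_on UNIV p"
    unfolding p_def[abs_def] by (rule lipschitz_on_infdist_ramp[OF assms(5)])
  show "(L + 1 / (r2 - r1) * M)-lipschitz_on UNIV (\<lambda>x. p x *\<^sub>R F x)"
    by (rule lipschitz_on_cutoff[OF assms(1,2,3) ramp p0 p01])
  show "norm (p x *\<^sub>R F x) \<le> M" for x
    using p01[of x] assms(2)[of x] p0[of x] assms(3)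
    by (cases "x \<in> A") (auto intro: order_trans[OF mult_left_le_one_le])
  show "p x *\<^sub>R F x = F x" if "infdist x Z < r1" for x
    using that assms(5) by (simp add: p_def field_simps)
qed

lemma trapping_region_trajectory_exists:
  fixes F g :: "'a::{real_inner,banach} \<Rightarrow> 'a" and V :: "'a \<Rightarrow> real" and Z :: "'a set" and \<rho> c :: real
  defines "K \<equiv> {x. infdist x Z \<le> \<rho> \<and> V x \<le> c}"
  assumes F: "L-lipschitz_on A F" "\<And>x. x \<in> A \<Longrightarrow> norm (F x) \<le> M" "M \<ge> 0"
    and radii: "\<rho> < \<rho>1" "\<rho>1 < \<rho>2" "{x. infdist x Z \<le> \<rho>2} \<subseteq> A"
    and "closed K" and boundary: "\<And>x. infdist x Z = \<rho> \<Longrightarrow> c < V x"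
    and V': "\<And>x. infdist x Z < \<rho>1 \<Longrightarrow> (V has_derivative (\<lambda>h. g x \<bullet> h)) (at x)"
    and descent: "\<And>x. infdist x Z < \<rho>1 \<Longrightarrow> g x \<bullet> F x \<le> 0"
    and "z0 \<in> K"
  obtains z where "z 0 = z0" "\<And>t. t \<ge> 0 \<Longrightarrow> z t \<in> K"
    "\<And>t. t \<ge> 0 \<Longrightarrow> (z has_vector_derivative F (z t)) (at t within {0..})"
proof -
  obtain L' G where G: "L'-lipschitz_on UNIV G" "\<And>x. norm (G x) \<le> M"
    and GF: "\<And>x. infdist x Z < \<rho>1 \<Longrightarrow> G x = F x"
    using cutoff_near_set[OF F radii(3,2)] by metis
  obtain z where "z 0 = z0" and z': "\<And>t. t \<ge> 0 \<Longrightarrow> (z has_vector_derivative G (z t)) (at t within {0..})"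
    using lipschitz_bounded_ode_solution[OF G] by blast
  have "continuous_on {0..} z"
    using has_vector_derivative_continuous[OF z'] by (auto simp: continuous_on_eq_continuous_within)
  define W where "W = {x. infdist x Z < \<rho>1}"
  have "open W"
    unfolding W_def by (intro open_Collect_less continuous_intros)
  have KW: "{x. infdist x Z \<le> \<rho> \<and> V x \<le> c} \<subseteq> W"
    using radii(1) by (auto simp: W_def)
  have zW: "(z has_vector_derivative F (z t)) (at t within {0..})" if "t \<ge> 0" "z t \<in> W" for t
    using z'[OF that(1)] GF[of "z t"] that(2) by (simp add: W_def)
  have VW: "(V has_derivative (\<lambda>h. g x \<bullet> h)) (at x)" "g x \<bullet> F x \<le> 0" if "x \<in> W" for x
    using V' descent that by (simp_all add: W_def)
  have "continuous_on UNIV (\<lambda>x. infdist x Z)"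
    by (intro continuous_intros)
  from trapping_region_invariant[OF this \<open>closed K\<close>[unfolded K_def] boundary \<open>open W\<close> KW VW
      \<open>continuous_on {0..} z\<close> zW]
  have K: "z t \<in> K" if "t \<ge> 0" for t
    using \<open>z 0 = z0\<close> \<open>z0 \<in> K\<close> that unfolding K_def by blast
  show thesis
  proof (rule that[of z])
    show "(z has_vector_derivative F (z t)) (at t within {0..})" if "t \<ge> 0" for t
      using z'[OF that] GF[of "z t"] K[OF that] radii(1) by (simp add: K_def)
  qed (use \<open>z 0 = z0\<close> K in auto)
qed

section \<open>Energy, angular momentum and the gradient of the Lyapunov function\<close>

lemma bounded_bilinear_cross3: "bounded_bilinear (cross3 :: real^3 \<Rightarrow> real^3 \<Rightarrow> real^3)"
  using bilinear_conv_bounded_bilinear bilinear_cross by blast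

lemma cross3_cross3: "cross3 (a::real^3) (cross3 b c) = (a \<bullet> c) *\<^sub>R b - (a \<bullet> b) *\<^sub>R c"
  by (simp add: cross3_simps forall_3)

(* The transpose of the Jacobian of z \<mapsto> (E z, L z), applied to w. *)
definition energy_angmom_adjoint :: "(real \<Rightarrow> real) \<Rightarrow> state \<Rightarrow> real \<times> (real^3) \<Rightarrow> state" where
  "energy_angmom_adjoint dU z w =
     ((fst w * dU (norm (fst z)) / norm (fst z)) *\<^sub>R fst z + cross3 (snd z) (snd w),
      fst w *\<^sub>R snd z + cross3 (snd w) (fst z))"

definition lyap_grad ::
  "(real \<Rightarrow> real) \<Rightarrow> (real \<Rightarrow> real) \<Rightarrow> real \<Rightarrow> real \<Rightarrow> real \<Rightarrow> real^3 \<Rightarrow> state \<Rightarrow> state" where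
  "lyap_grad U dU k1 k2 E0 L0 z =
     energy_angmom_adjoint dU z (k1 * (energy U z - E0), k2 *\<^sub>R (angmom z - L0))"

lemma energy_angmom_adjoint_scaleR:
  "energy_angmom_adjoint dU z (c *\<^sub>R w) = c *\<^sub>R energy_angmom_adjoint dU z w"
  by (simp add: energy_angmom_adjoint_def cross_mult_left cross_mult_right algebra_simps)

lemma inner_energy_angmom_adjoint:
  "energy_angmom_adjoint dU z w \<bullet> h =
     fst w * (snd z \<bullet> snd h + dU (norm (fst z)) / norm (fst z) * (fst z \<bullet> fst h))
     + snd w \<bullet> (cross3 (fst h) (snd z) + cross3 (fst z) (snd h))"
proof -
  have "cross3 (snd z) (snd w) \<bullet> fst h = snd w \<bullet> cross3 (fst h) (snd z)"
    and "cross3 (snd w) (fst z) \<bullet> snd h = snd w \<bullet> cross3 (fst z) (snd h)"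
    by (simp_all add: cross3_simps)
  then show ?thesis
    by (simp add: energy_angmom_adjoint_def inner_prod_def inner_commute algebra_simps)
qed

lemma ctrl_field_eq:
  "ctrl_field U dU k1 k2 E0 L0 z =
     (snd z, - (dU (norm (fst z)) / norm (fst z)) *\<^sub>R fst z) - lyap_grad U dU k1 k2 E0 L0 z"
  by (simp add: ctrl_field_def lyap_grad_def energy_angmom_adjoint_def Let_def cross_mult_left
      cross_mult_right)

lemma has_derivative_energy:
  assumes U: "\<And>r. r > 0 \<Longrightarrow> (U has_real_derivative dU r) (at r)" and x: "fst z \<noteq> 0"
  shows "(energy U has_derivative
           (\<lambda>h. snd z \<bullet> snd h + dU (norm (fst z)) / norm (fst z) * (fst z \<bullet> fst h))) (at z)"
proof -
  have n: "((\<lambda>z. norm (fst z)) has_derivative (\<lambda>h. fst h \<bullet> sgn (fst z))) (at z)"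
    using has_derivative_compose[OF has_derivative_fst[OF has_derivative_ident] has_derivative_norm[OF x]]
    by simp
  have u: "(U has_derivative (\<lambda>h. h * dU (norm (fst z)))) (at (norm (fst z)))"
    using U[of "norm (fst z)"] x unfolding has_field_derivative_def
    by (rule_tac has_derivative_eq_rhs) (auto simp: fun_eq_iff)
  have v: "((\<lambda>z. (norm (snd z))\<^sup>2 / 2) has_derivative (\<lambda>h. snd z \<bullet> snd h)) (at z)"
    unfolding power2_norm_eq_inner
    by (rule derivative_eq_intros refl | simp add: inner_commute)+
  show ?thesis unfolding energy_def
    by (rule has_derivative_eq_rhs[OF has_derivative_add[OF v has_derivative_compose[OF n u]]])
       (auto simp: sgn_div_norm inner_commute fun_eq_iff field_simps)
qed

lemma has_derivative_angmom:
  "(angmom has_derivative (\<lambda>h. cross3 (fst h) (snd z) + cross3 (fst z) (snd h))) (at z)"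
  unfolding angmom_def
  by (rule has_derivative_eq_rhs[OF bounded_bilinear.FDERIV[OF bounded_bilinear_cross3
        has_derivative_fst[OF has_derivative_ident] has_derivative_snd[OF has_derivative_ident]]])
     (auto simp: fun_eq_iff add.commute)

lemma has_derivative_lyap:
  assumes U: "\<And>r. r > 0 \<Longrightarrow> (U has_real_derivative dU r) (at r)" and x: "fst z \<noteq> 0"
  shows "(lyap U k1 k2 E0 L0 has_derivative (\<lambda>h. lyap_grad U dU k1 k2 E0 L0 z \<bullet> h)) (at z)"
  unfolding lyap_def lyap_grad_def inner_energy_angmom_adjoint power2_norm_eq_inner
  by (rule has_derivative_eq_rhs,
      (rule derivative_eq_intros has_derivative_energy[OF U x] has_derivative_angmom refl | simp)+)
     (simp add: fun_eq_iff field_simps inner_commute)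

lemma lyap_grad_inner_ctrl_field:
  "lyap_grad U dU k1 k2 E0 L0 z \<bullet> ctrl_field U dU k1 k2 E0 L0 z
     = - (norm (lyap_grad U dU k1 k2 E0 L0 z))\<^sup>2"
proof -
  have "lyap_grad U dU k1 k2 E0 L0 z \<bullet> (snd z, - (dU (norm (fst z)) / norm (fst z)) *\<^sub>R fst z) = 0"
    unfolding lyap_grad_def inner_energy_angmom_adjoint by (simp add: inner_commute cross_mult_right)
  then show ?thesis
    unfolding ctrl_field_eq inner_diff_right by (simp add: power2_norm_eq_inner)
qed

section \<open>Critical points of the Lyapunov function\<close>

lemma cross3_common_factor_eq_0:
  fixes x v mu :: "real^3"
  assumes "cross3 x mu = 0" "cross3 v mu = 0" "cross3 x v \<noteq> 0"
  shows "mu = 0"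
proof (rule ccontr)
  assume "mu \<noteq> 0"
  have x: "(mu \<bullet> mu) *\<^sub>R x = (mu \<bullet> x) *\<^sub>R mu" and v: "(mu \<bullet> mu) *\<^sub>R v = (mu \<bullet> v) *\<^sub>R mu"
    using cross3_cross3[of mu x mu] cross3_cross3[of mu v mu] assms(1,2) cross_skew[of x mu]
    by simp_all
  have "((mu \<bullet> mu) * (mu \<bullet> mu)) *\<^sub>R cross3 x v = cross3 ((mu \<bullet> mu) *\<^sub>R x) ((mu \<bullet> mu) *\<^sub>R v)"
    by (simp add: cross_mult_left cross_mult_right)
  also have "\<dots> = 0"
    unfolding x v by (simp add: cross_mult_left cross_mult_right)
  finally show False
    using \<open>mu \<noteq> 0\<close> assms(3) by simp
qed

(* A rotation v = x \<times> \<nu> balancing the radial force is a circular orbit: \<nu> \<perp> x and |\<nu>|^2 = d / |x|. *)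
lemma circular_orbit_of_balanced_rotation:
  fixes x v \<nu> :: "real^3"
  assumes x: "x \<noteq> 0" and xv: "cross3 x v \<noteq> 0" and v: "v = cross3 x \<nu>"
    and balance: "(d / norm x) *\<^sub>R x + cross3 v \<nu> = 0"
  shows "(norm v)\<^sup>2 = norm x * d \<and> (norm (cross3 x v))\<^sup>2 = norm x ^ 3 * d"
proof -
  have "cross3 v \<nu> = (\<nu> \<bullet> x) *\<^sub>R \<nu> - (\<nu> \<bullet> \<nu>) *\<^sub>R x"
    unfolding v using cross3_cross3[of \<nu> x \<nu>] cross_skew[of "cross3 x \<nu>" \<nu>] by simp
  with balance have e: "(d / norm x - \<nu> \<bullet> \<nu>) *\<^sub>R x + (\<nu> \<bullet> x) *\<^sub>R \<nu> = 0"
    by (simp add: algebra_simps)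
  have \<nu>x: "\<nu> \<bullet> x = 0"
  proof (rule ccontr)
    assume "\<nu> \<bullet> x \<noteq> 0"
    moreover have "(\<nu> \<bullet> x) *\<^sub>R cross3 x \<nu> = 0"
      using arg_cong[OF e, of "cross3 x"] by (simp add: cross_add_right cross_mult_right)
    ultimately show False
      using xv v by simp
  qed
  have "(d / norm x - \<nu> \<bullet> \<nu>) *\<^sub>R x = 0"
    using e \<nu>x by simp
  then have d: "d = norm x * (\<nu> \<bullet> \<nu>)"
    using x by (simp add: field_simps)
  have "(norm v)\<^sup>2 = (norm x * norm \<nu>)\<^sup>2"
    using norm_cross_dot[of x \<nu>] \<nu>x unfolding v by (simp add: inner_commute)
  then have "(norm v)\<^sup>2 = norm x * d"
    by (simp add: d power2_eq_square power2_norm_eq_inner[symmetric])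
  moreover have "cross3 x v = - (x \<bullet> x) *\<^sub>R \<nu>"
    unfolding v cross3_cross3 using \<nu>x by (simp add: inner_commute)
  then have "(norm (cross3 x v))\<^sup>2 = (x \<bullet> x)\<^sup>2 * (\<nu> \<bullet> \<nu>)"
    by (simp add: power_mult_distrib power2_norm_eq_inner)
  then have "(norm (cross3 x v))\<^sup>2 = norm x ^ 3 * d"
    by (simp add: d power2_norm_eq_inner[symmetric] power2_eq_square power3_eq_cube)
  ultimately show ?thesis ..
qed

lemma energy_angmom_adjoint_eq_0_cases:
  assumes x: "fst z \<noteq> 0" and L: "angmom z \<noteq> 0" and P: "energy_angmom_adjoint dU z w = 0"
  shows "w = 0 \<or> (norm (snd z))\<^sup>2 = norm (fst z) * dU (norm (fst z)) \<and>
                  (norm (angmom z))\<^sup>2 = norm (fst z) ^ 3 * dU (norm (fst z))"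
proof -
  obtain x v where z: "z = (x, v)" by fastforce
  obtain \<alpha> \<mu> where w: "w = (\<alpha>, \<mu>)" by fastforce
  define d where "d = dU (norm x)"
  have e1: "(\<alpha> * d / norm x) *\<^sub>R x + cross3 v \<mu> = 0" and e2: "\<alpha> *\<^sub>R v + cross3 \<mu> x = 0"
    using P by (simp_all add: z w d_def energy_angmom_adjoint_def prod_eq_iff)
  have xv: "cross3 x v \<noteq> 0"
    using L by (simp add: z angmom_def)
  show ?thesis
  proof (cases "\<alpha> = 0")
    case True
    then have "cross3 x \<mu> = 0" and "cross3 v \<mu> = 0"
      using e1 e2 cross_skew[of \<mu> x] by simp_all
    then have "\<mu> = 0"
      using cross3_common_factor_eq_0 xv by blast
    then show ?thesis
      using True by (simp add: w zero_prod_def)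
  next
    case False
    define \<nu> where "\<nu> = (1 / \<alpha>) *\<^sub>R \<mu>"
    have \<mu>: "\<mu> = \<alpha> *\<^sub>R \<nu>"
      using False by (simp add: \<nu>_def)
    have "\<alpha> *\<^sub>R v = \<alpha> *\<^sub>R cross3 x \<nu>"
      using e2 unfolding \<mu>
      by (simp add: cross_mult_left cross_mult_right cross_skew[of \<nu> x] eq_neg_iff_add_eq_0 add.commute)
    then have v: "v = cross3 x \<nu>"
      using False by simp
    have "\<alpha> *\<^sub>R ((d / norm x) *\<^sub>R x + cross3 v \<nu>) = 0"
      using e1 unfolding \<mu> by (simp add: cross_mult_right algebra_simps)
    then have "(d / norm x) *\<^sub>R x + cross3 v \<nu> = 0"
      using False by simp
    then show ?thesis
      using circular_orbit_of_balanced_rotation[OF _ xv v] x by (simp add: z angmom_def d_def)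
  qed
qed

lemma energy_angmom_adjoint_injective_on_level:
  assumes "fst z \<noteq> 0" "energy U z = E0" "angmom z = L0" "L0 \<noteq> 0"
    and no_circular_orbit: "\<not> (\<exists>r>0. E0 = r * dU r / 2 + U r \<and> (norm L0)\<^sup>2 = r ^ 3 * dU r)"
    and "energy_angmom_adjoint dU z w = 0"
  shows "w = 0"
  using energy_angmom_adjoint_eq_0_cases[of z dU w] assms
  by (auto simp: energy_def)

lemma continuous_on_energy_angmom_adjoint:
  assumes "continuous_on {0<..} dU"
  shows "continuous_on {p. fst (fst p) \<noteq> 0} (\<lambda>p. energy_angmom_adjoint dU (fst p) (snd p))"
proof -
  have "continuous_on {p. fst (fst p) \<noteq> 0} (\<lambda>p. dU (norm (fst (fst p))))"
    by (rule continuous_on_compose2[OF assms], intro continuous_intros) auto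
  then show ?thesis
    unfolding energy_angmom_adjoint_def by (intro continuous_intros continuous_on_cross) auto
qed

lemma energy_angmom_adjoint_injective_near_level:
  assumes Z: "compact Z" "Z \<noteq> {}"
    and level: "\<And>y. y \<in> Z \<Longrightarrow> fst y \<noteq> 0 \<and> energy U y = E0 \<and> angmom y = L0"
    and "L0 \<noteq> 0"
    and no_circular_orbit: "\<not> (\<exists>r>0. E0 = r * dU r / 2 + U r \<and> (norm L0)\<^sup>2 = r ^ 3 * dU r)"
    and "continuous_on {0<..} dU"
  obtains \<epsilon> where "\<epsilon> > 0"
    "\<And>z w. fst z \<noteq> 0 \<Longrightarrow> infdist z Z < \<epsilon> \<Longrightarrow> energy_angmom_adjoint dU z w = 0 \<Longrightarrow> w = 0"
proof -
  (* On unit vectors w injectivity is an open condition, so it persists on a uniform neighbourhood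
     of the compact set Z \<times> sphere 0 1. *)
  define good where "good = {p. fst (fst p) \<noteq> 0} \<inter>
                      (\<lambda>p. energy_angmom_adjoint dU (fst p) (snd p)) -` (- {0})"
  have "open good"
    unfolding good_def using continuous_on_energy_angmom_adjoint[OF assms(6)]
    by (intro continuous_open_preimage open_Collect_neq continuous_intros) auto
  moreover have "Z \<times> sphere 0 1 \<subseteq> good"
    using energy_angmom_adjoint_injective_on_level[OF _ _ _ assms(4,5)] level
    by (fastforce simp: good_def)
  ultimately obtain \<epsilon> where "\<epsilon> > 0" and \<epsilon>: "(\<Union>p\<in>Z \<times> sphere 0 1. ball p \<epsilon>) \<subseteq> good"
    using compact_subset_open_imp_ball_epsilon_subset compact_Times[OF Z(1) compact_sphere] by metis
  have "w = 0"
    if "fst z \<noteq> 0" "infdist z Z < \<epsilon>" "energy_angmom_adjoint dU z w = 0" for z w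
  proof (rule ccontr)
    assume "w \<noteq> 0"
    obtain y where "y \<in> Z" "infdist z Z = dist z y"
      using infdist_attains_inf[OF compact_imp_closed[OF Z(1)] Z(2)] by metis
    then have "(z, (1 / norm w) *\<^sub>R w) \<in> ball (y, (1 / norm w) *\<^sub>R w) \<epsilon>"
      and "(y, (1 / norm w) *\<^sub>R w) \<in> Z \<times> sphere 0 1"
      using that(2) \<open>w \<noteq> 0\<close> by (simp_all add: dist_Pair_Pair dist_commute)
    then have "(z, (1 / norm w) *\<^sub>R w) \<in> good"
      using \<epsilon> by blast
    then have "energy_angmom_adjoint dU z ((1 / norm w) *\<^sub>R w) \<noteq> 0"
      by (simp add: good_def)
    then show False
      using that(3) by (simp add: energy_angmom_adjoint_scaleR)
  qed
  with \<open>\<epsilon> > 0\<close> show ?thesis using that by blast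
qed

section \<open>The controlled central force problem\<close>

definition phase_box :: "real \<Rightarrow> real \<Rightarrow> state set" where
  "phase_box a b = {z. a \<le> norm (fst z) \<and> norm (fst z) \<le> b \<and> norm (snd z) \<le> b}"

lemma open_phase: "open phase"
  unfolding phase_def by (intro open_Collect_neq continuous_intros)

lemma phase_box_subset_phase: "a > 0 \<Longrightarrow> phase_box a b \<subseteq> phase"
  by (auto simp: phase_box_def phase_def)

lemma bounded_phase_box: "bounded (phase_box a b)"
  by (rule bounded_subset[of "cball 0 b \<times> cball 0 b"]) (auto simp: phase_box_def intro!: bounded_Times)

lemma phase_box_infdist_le:
  assumes "compact Z" "Z \<noteq> {}" "Z \<subseteq> phase"
  obtains m R where "m > 0" "\<And>z r. infdist z Z \<le> r \<Longrightarrow> z \<in> phase_box (m - r) (R + r)"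
proof -
  have "\<exists>y0\<in>Z. \<forall>y\<in>Z. norm (fst y0) \<le> norm (fst y)"
    by (rule continuous_attains_inf[OF assms(1,2)]) (intro continuous_intros)
  then obtain y0 where "y0 \<in> Z" and y0: "\<And>y. y \<in> Z \<Longrightarrow> norm (fst y0) \<le> norm (fst y)"
    by blast
  obtain R where R: "\<And>y. y \<in> Z \<Longrightarrow> norm y \<le> R"
    using compact_imp_bounded[OF assms(1)] bounded_iff by metis
  have "z \<in> phase_box (norm (fst y0) - r) (R + r)" if "infdist z Z \<le> r" for z r
  proof -
    obtain y where "y \<in> Z" "infdist z Z = dist z y"
      using infdist_attains_inf[OF compact_imp_closed[OF assms(1)] assms(2)] by metis
    then have "norm (z - y) \<le> r" "norm y \<le> R"
      using that R[of y] by (simp_all add: dist_norm)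
    moreover have "norm (fst w) \<le> norm w" "norm (snd w) \<le> norm w" for w :: state
      using norm_fst_le[of "fst w" "snd w"] norm_snd_le[of "snd w" "fst w"] by simp_all
    ultimately have "norm (fst (z - y)) \<le> r" "norm (snd (z - y)) \<le> r" "norm (fst y) \<le> R" "norm (snd y) \<le> R"
      by (meson order_trans)+
    then show ?thesis
      using y0[OF \<open>y \<in> Z\<close>] norm_triangle_ineq2[of "fst y" "fst z"] norm_triangle_ineq2[of "fst z" "fst y"]
        norm_triangle_ineq2[of "snd z" "snd y"]
      by (auto simp: phase_box_def norm_minus_commute)
  qed
  moreover have "norm (fst y0) > 0"
    using \<open>y0 \<in> Z\<close> assms(3) by (auto simp: phase_def)
  ultimately show thesis
    using that by blast
qed

locale central_force_control =
  fixes U dU ddU :: "real \<Rightarrow> real" and k1 k2 E0 :: real and L0 :: "real^3"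
  assumes U_deriv: "\<And>r. r > 0 \<Longrightarrow> (U has_real_derivative dU r) (at r)"
    and dU_deriv: "\<And>r. r > 0 \<Longrightarrow> (dU has_real_derivative ddU r) (at r)"
    and ddU_cont: "continuous_on {0<..} ddU"
    and k1: "k1 > 0" and k2: "k2 > 0"
    and L0_nonzero: "L0 \<noteq> 0"
    and level_compact: "compact {z \<in> phase. lyap U k1 k2 E0 L0 z = 0}"
    and level_nonempty: "{z \<in> phase. lyap U k1 k2 E0 L0 z = 0} \<noteq> {}"
    and no_circular_orbit: "\<not> (\<exists>r>0. E0 = r * dU r / 2 + U r \<and> (norm L0)\<^sup>2 = r ^ 3 * dU r)"
begin

abbreviation "V \<equiv> lyap U k1 k2 E0 L0"
abbreviation "F \<equiv> ctrl_field U dU k1 k2 E0 L0"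
abbreviation "gradV \<equiv> lyap_grad U dU k1 k2 E0 L0"
abbreviation "level \<equiv> {z \<in> phase. V z = 0}"

lemma V_nonneg: "V z \<ge> 0"
  using k1 k2 by (simp add: lyap_def)

lemma V_eq_0_iff: "V z = 0 \<longleftrightarrow> energy U z = E0 \<and> angmom z = L0"
  using k1 k2 by (simp add: lyap_def add_nonneg_eq_0_iff)

lemma continuous_on_U: "continuous_on {0<..} U"
  using DERIV_isCont[OF U_deriv] by (auto intro: continuous_at_imp_continuous_on)

lemma continuous_on_dU: "continuous_on {0<..} dU"
  using DERIV_isCont[OF dU_deriv] by (auto intro: continuous_at_imp_continuous_on)

lemma has_derivative_V: "z \<in> phase \<Longrightarrow> (V has_derivative (\<lambda>h. gradV z \<bullet> h)) (at z)"
  by (rule has_derivative_lyap[OF U_deriv]) (auto simp: phase_def)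

lemma continuous_on_V: "continuous_on phase V"
  using has_derivative_V has_derivative_continuous by (blast intro: continuous_at_imp_continuous_on)

lemma continuous_on_gradV: "continuous_on phase gradV"
proof -
  have "continuous_on phase (\<lambda>z. U (norm (fst z)))" "continuous_on phase (\<lambda>z. dU (norm (fst z)))"
    by (rule continuous_on_compose2[OF continuous_on_U], intro continuous_intros, force simp: phase_def)
       (rule continuous_on_compose2[OF continuous_on_dU], intro continuous_intros, force simp: phase_def)
  then show ?thesis
    unfolding lyap_grad_def energy_angmom_adjoint_def energy_def angmom_def
    by (intro continuous_intros continuous_on_cross) (auto simp: phase_def)
qed

lemma gradV_inner_F: "gradV z \<bullet> F z \<le> 0"
  by (simp add: lyap_grad_inner_ctrl_field)

lemma level_eq: "level = {z \<in> phase. energy U z = E0 \<and> angmom z = L0}"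
  using V_eq_0_iff by auto

lemma critical_points_near_level:
  obtains \<epsilon> where "\<epsilon> > 0" "\<And>z. z \<in> phase \<Longrightarrow> infdist z level < \<epsilon> \<Longrightarrow> gradV z = 0 \<Longrightarrow> V z = 0"
proof -
  obtain \<epsilon> where "\<epsilon> > 0" and \<epsilon>: "\<And>z w. fst z \<noteq> 0 \<Longrightarrow> infdist z level < \<epsilon> \<Longrightarrow>
      energy_angmom_adjoint dU z w = 0 \<Longrightarrow> w = 0"
    using energy_angmom_adjoint_injective_near_level[OF level_compact level_nonempty _ L0_nonzero
        no_circular_orbit continuous_on_dU] V_eq_0_iff by (auto simp: phase_def)
  have "V z = 0" if "z \<in> phase" "infdist z level < \<epsilon>" "gradV z = 0" for z
  proof -
    have "(k1 * (energy U z - E0), k2 *\<^sub>R (angmom z - L0)) = 0"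
      using \<epsilon>[of z] that by (simp add: lyap_grad_def phase_def)
    then show ?thesis
      using k1 k2 V_eq_0_iff by (simp add: zero_prod_def)
  qed
  with \<open>\<epsilon> > 0\<close> show thesis
    using that by blast
qed

lemma bounded_lipschitz_on_F:
  assumes "a > 0"
  shows "bounded_lipschitz_on (phase_box a b) F"
proof -
  let ?S = "phase_box a b"
  have x: "bounded_lipschitz_on ?S fst" and v: "bounded_lipschitz_on ?S snd"
    by (simp_all add: bounded_lipschitz_on_linear bounded_phase_box bounded_linear_fst bounded_linear_snd)
  have "bounded (fst ` ?S)"
    by (rule bounded_linear_image[OF bounded_phase_box bounded_linear_fst])
  then have r: "bounded_lipschitz_on ?S (\<lambda>z. norm (fst z))"
    by (rule bounded_lipschitz_on_compose[OF bounded_lipschitz_on_norm _ order_refl]) (rule x)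
  have r_range: "(\<lambda>z. norm (fst z)) ` ?S \<subseteq> {a..b}"
    by (auto simp: phase_box_def)
  have "continuous_on {a..b} dU"
    by (rule continuous_on_subset[OF continuous_on_dU]) (use assms in auto)
  then have "bounded_lipschitz_on {a..b} U"
    by (rule bounded_lipschitz_on_real_C1[rotated]) (use assms U_deriv in auto)
  moreover have "continuous_on {a..b} ddU"
    by (rule continuous_on_subset[OF ddU_cont]) (use assms in auto)
  with \<open>continuous_on {a..b} dU\<close> have "bounded_lipschitz_on {a..b} (\<lambda>r. dU r / r)"
    using assms dU_deriv
    by (intro bounded_lipschitz_on_real_C1[where f'="\<lambda>r. (ddU r * r - dU r) / r\<^sup>2"])
       (auto intro!: derivative_eq_intros continuous_intros simp: power2_eq_square field_simps)
  ultimately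
  have u: "bounded_lipschitz_on ?S (\<lambda>z. U (norm (fst z)))"
    and q: "bounded_lipschitz_on ?S (\<lambda>z. dU (norm (fst z)) / norm (fst z))"
    by (auto intro: bounded_lipschitz_on_compose[OF _ r r_range])
  have "(\<lambda>z. energy U z - E0) = (\<lambda>z. (snd z \<bullet> snd z) * (1 / 2) + U (norm (fst z)) - E0)"
    by (simp add: fun_eq_iff energy_def power2_norm_eq_inner)
  then have e: "bounded_lipschitz_on ?S (\<lambda>z. energy U z - E0)"
    by (simp only:) (intro bounded_lipschitz_on_diff bounded_lipschitz_on_add bounded_lipschitz_on_const
        bounded_lipschitz_on_bilinear[OF bounded_bilinear_mult]
        bounded_lipschitz_on_bilinear[OF bounded_bilinear_inner] u v)
  have l: "bounded_lipschitz_on ?S (\<lambda>z. angmom z - L0)"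
    unfolding angmom_def
    by (intro bounded_lipschitz_on_diff bounded_lipschitz_on_const
        bounded_lipschitz_on_bilinear[OF bounded_bilinear_cross3] x v)
  have "F = (\<lambda>z. (snd z - ((k1 * (energy U z - E0)) * (dU (norm (fst z)) / norm (fst z))) *\<^sub>R fst z
                       - k2 *\<^sub>R cross3 (snd z) (angmom z - L0),
                   - (dU (norm (fst z)) / norm (fst z)) *\<^sub>R fst z - (k1 * (energy U z - E0)) *\<^sub>R snd z
                       - k2 *\<^sub>R cross3 (angmom z - L0) (fst z)))"
    by (auto simp: fun_eq_iff ctrl_field_def Let_def)
  then show ?thesis
    by (simp only:) (intro bounded_lipschitz_on_Pair bounded_lipschitz_on_diff bounded_lipschitz_on_minus
        bounded_lipschitz_on_bilinear[OF bounded_bilinear_scaleR]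
        bounded_lipschitz_on_bilinear[OF bounded_bilinear_mult]
        bounded_lipschitz_on_bilinear[OF bounded_bilinear_cross3] bounded_lipschitz_on_const x v q e l)
qed

end

(* The trapping region is the sublevel set {V \<le> c} of the tube of radius r around the level set;
   the wider tube of radius 3 r, free of critical points other than zeros of V, leaves room for
   cutting off the field. *)
locale trapping_tube = central_force_control +
  fixes r a b c :: real
  assumes r_pos: "r > 0" and a_pos: "a > 0"
    and tube_box: "\<And>z. infdist z level \<le> 3 * r \<Longrightarrow> z \<in> phase_box a b"
    and tube_critical: "\<And>z. infdist z level \<le> 3 * r \<Longrightarrow> gradV z = 0 \<Longrightarrow> V z = 0"
    and c_pos: "c > 0" and boundary: "\<And>z. infdist z level = r \<Longrightarrow> c < V z"
    and compact_sublevel: "compact {z. infdist z level \<le> r \<and> V z \<le> c}"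
begin

abbreviation "tube \<equiv> {z. infdist z level < r}"
abbreviation "sublevel \<equiv> {z \<in> tube. V z \<le> c}"

lemma sublevel_eq: "sublevel = {z. infdist z level \<le> r \<and> V z \<le> c}"
proof -
  have "infdist z level < r" if "infdist z level \<le> r" "V z \<le> c" for z
  proof (rule ccontr)
    assume "\<not> infdist z level < r"
    then have "c < V z"
      using that(1) boundary[of z] by simp
    then show False
      using that(2) by simp
  qed
  then show ?thesis
    by auto
qed

lemma tube_subset_phase: "infdist z level \<le> 3 * r \<Longrightarrow> z \<in> phase"
  using tube_box phase_box_subset_phase[OF a_pos] by blast

lemma sublevel_subset_phase: "{z. infdist z level \<le> r \<and> V z \<le> c} \<subseteq> phase"
proof
  fix z
  assume "z \<in> {z. infdist z level \<le> r \<and> V z \<le> c}"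
  then have "infdist z level \<le> 3 * r"
    using r_pos by simp
  then show "z \<in> phase"
    by (rule tube_subset_phase)
qed

lemma critical_point_in_sublevel:
  assumes "z \<in> sublevel" "(V has_derivative (\<lambda>h. 0)) (at z)"
  shows "V z = 0"
proof -
  have "infdist z level \<le> 3 * r"
    using assms(1) r_pos by simp
  then have "(\<lambda>h. gradV z \<bullet> h) = (\<lambda>h. 0)"
    using has_derivative_unique[OF has_derivative_V[OF tube_subset_phase] assms(2)] by blast
  then have "gradV z \<bullet> gradV z = 0"
    by (rule fun_cong)
  then have "gradV z = 0"
    by simp
  then show ?thesis
    using tube_critical[OF \<open>infdist z level \<le> 3 * r\<close>] by simp
qed

lemma trajectory_exists:
  assumes "z0 \<in> sublevel"
  obtains z where "z 0 = z0"
    "\<And>t. t \<ge> 0 \<Longrightarrow> z t \<in> phase \<and> (z has_vector_derivative F (z t)) (at t within {0..})"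
proof -
  obtain L where L: "L-lipschitz_on (phase_box a b) F" and "bounded (F ` phase_box a b)"
    using bounded_lipschitz_on_F[OF a_pos] unfolding bounded_lipschitz_on_def by blast
  then obtain M where "M > 0" and M: "\<And>z. z \<in> phase_box a b \<Longrightarrow> norm (F z) \<le> M"
    unfolding bounded_pos by blast
  have radii: "r < 2 * r" "2 * r < 3 * r"
    using r_pos by simp_all
  have box: "{z. infdist z level \<le> 3 * r} \<subseteq> phase_box a b"
    using tube_box by blast
  have V': "(V has_derivative (\<lambda>h. gradV z \<bullet> h)) (at z)" if "infdist z level < 2 * r" for z
    using that r_pos by (intro has_derivative_V tube_subset_phase) simp
  have descent: "gradV z \<bullet> F z \<le> 0" if "infdist z level < 2 * r" for z
    by (rule gradV_inner_F)
  have "z0 \<in> {z. infdist z level \<le> r \<and> V z \<le> c}"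
    using assms by simp
  from trapping_region_trajectory_exists[OF L M less_imp_le[OF \<open>M > 0\<close>] radii box
      compact_imp_closed[OF compact_sublevel] boundary V' descent this]
  obtain z where "z 0 = z0" and z: "\<And>t. t \<ge> 0 \<Longrightarrow> z t \<in> {z. infdist z level \<le> r \<and> V z \<le> c}"
    "\<And>t. t \<ge> 0 \<Longrightarrow> (z has_vector_derivative F (z t)) (at t within {0..})"
    by blast
  show thesis
  proof (rule that[of z])
    show "z 0 = z0"
      by fact
    show "z t \<in> phase \<and> (z has_vector_derivative F (z t)) (at t within {0..})" if "t \<ge> 0" for t
      using z[OF that] sublevel_subset_phase by blast
  qed
qed

lemma trajectory_converges:
  assumes z0: "z 0 \<in> sublevel"
    and z: "\<And>t. t \<ge> 0 \<Longrightarrow> z t \<in> phase \<and> (z has_vector_derivative F (z t)) (at t within {0..})"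
  shows "\<forall>t\<ge>0. z t \<in> sublevel" "((\<lambda>t. infdist (z t) level) \<longlongrightarrow> 0) at_top"
proof -
  have "continuous (at t within {0..}) z" if "t \<ge> 0" for t
    using z[OF that] has_vector_derivative_continuous by blast
  then have z_cont: "continuous_on {0..} z"
    by (auto simp: continuous_on_eq_continuous_within)
  have d_cont: "continuous_on UNIV (\<lambda>x. infdist x level)"
    by (intro continuous_intros)
  have descent: "gradV x \<bullet> F x \<le> 0" if "x \<in> phase" for x
    by (rule gradV_inner_F)
  have z': "(z has_vector_derivative F (z t)) (at t within {0..})" if "t \<ge> 0" "z t \<in> phase" for t
    using z[OF that(1)] by blast
  have "z 0 \<in> {z. infdist z level \<le> r \<and> V z \<le> c}"
    using z0 by simp
  from trapping_region_invariant[OF d_cont compact_imp_closed[OF compact_sublevel] boundary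
      open_phase sublevel_subset_phase has_derivative_V descent z_cont z' this]
  show inside: "\<forall>t\<ge>0. z t \<in> sublevel"
    unfolding sublevel_eq by blast
  have "compact sublevel"
    using compact_sublevel sublevel_eq by simp
  moreover have "continuous_on sublevel V" "continuous_on sublevel gradV"
    using sublevel_subset_phase unfolding sublevel_eq
    by (auto intro: continuous_on_subset[OF continuous_on_V] continuous_on_subset[OF continuous_on_gradV])
  moreover have "V x = 0 \<Longrightarrow> x \<in> level" if "x \<in> sublevel" for x
    using that sublevel_subset_phase unfolding sublevel_eq by blast
  moreover have "gradV x = 0 \<Longrightarrow> V x = 0" if "x \<in> sublevel" for x
    using that r_pos by (intro tube_critical) simp_all
  moreover have "((\<lambda>s. V (z s)) has_real_derivative - (norm (gradV (z t)))\<^sup>2) (at t within {0..})"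
    if "t \<ge> 0" for t
    using has_real_derivative_along_trajectory[OF has_derivative_V, of z t "F (z t)" "{0..}"] z[OF that]
    by (simp add: lyap_grad_inner_ctrl_field)
  ultimately show "((\<lambda>t. infdist (z t) level) \<longlongrightarrow> 0) at_top"
    using lyapunov_convergence[of sublevel V gradV level z] V_nonneg inside by blast
qed

end

lemma (in central_force_control) trapping_tube_exists:
  obtains r a b c where "trapping_tube U dU ddU k1 k2 E0 L0 r a b c"
proof -
  obtain \<epsilon> where "\<epsilon> > 0" and \<epsilon>: "\<And>z. z \<in> phase \<Longrightarrow> infdist z level < \<epsilon> \<Longrightarrow> gradV z = 0 \<Longrightarrow> V z = 0"
    by (rule critical_points_near_level) blast
  obtain m R where "m > 0" and box: "\<And>z r. infdist z level \<le> r \<Longrightarrow> z \<in> phase_box (m - r) (R + r)"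
    by (rule phase_box_infdist_le[OF level_compact level_nonempty]) (auto intro: that)
  define r where "r = min \<epsilon> m / 4"
  have "r > 0" "3 * r < \<epsilon>" "3 * r < m"
    using \<open>\<epsilon> > 0\<close> \<open>m > 0\<close> by (auto simp: r_def)
  have tube: "z \<in> phase_box (m - 3 * r) (R + 3 * r)" "z \<in> phase" if "infdist z level \<le> 3 * r" for z
    using box[OF that] phase_box_subset_phase[of "m - 3 * r"] \<open>3 * r < m\<close> by auto
  have cont: "continuous_on {z. infdist z level \<le> r} V"
    by (rule continuous_on_subset[OF continuous_on_V]) (use tube(2) \<open>r > 0\<close> in force)
  have nonneg: "V z \<ge> 0" if "infdist z level \<le> r" for z
    using V_nonneg .
  have zero: "z \<in> level" if "infdist z level \<le> r" "V z = 0" for z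
    using tube(2)[of z] that \<open>r > 0\<close> by auto
  obtain c where c: "c > 0" "\<And>z. infdist z level = r \<Longrightarrow> c < V z"
    "compact {z. infdist z level \<le> r \<and> V z \<le> c}"
    using trapping_level_exists[OF level_compact level_nonempty \<open>r > 0\<close> cont nonneg zero] by blast
  have crit: "V z = 0" if "infdist z level \<le> 3 * r" "gradV z = 0" for z
    using \<epsilon>[OF tube(2)[OF that(1)]] that \<open>3 * r < \<epsilon>\<close> by simp
  have "m - 3 * r > 0"
    using \<open>3 * r < m\<close> by simp
  then have "trapping_tube U dU ddU k1 k2 E0 L0 r (m - 3 * r) (R + 3 * r) c"
    by (intro trapping_tube.intro central_force_control_axioms trapping_tube_axioms.intro
        \<open>r > 0\<close> tube(1) crit c)
  then show thesis
    by (rule that)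
qed

lemma (in central_force_control) stabilization:
  "\<exists>N c. open N \<and> N \<subseteq> phase \<and> level \<subseteq> N \<and> c > 0 \<and> compact {z \<in> N. V z \<le> c} \<and>
     (\<forall>z \<in> {z \<in> N. V z \<le> c}. (V has_derivative (\<lambda>h. 0)) (at z) \<longrightarrow> V z = 0) \<and>
     (\<forall>z0 \<in> {z \<in> N. V z \<le> c}. \<exists>z. z 0 = z0 \<and>
        (\<forall>t\<ge>0. z t \<in> phase \<and> (z has_vector_derivative F (z t)) (at t within {0..}))) \<and>
     (\<forall>z. z 0 \<in> {z \<in> N. V z \<le> c} \<and>
        (\<forall>t\<ge>0. z t \<in> phase \<and> (z has_vector_derivative F (z t)) (at t within {0..})) \<longrightarrow>
        (\<forall>t\<ge>0. z t \<in> {z \<in> N. V z \<le> c}) \<and>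
        ((\<lambda>t. infdist (z t) {z \<in> phase. energy U z = E0 \<and> angmom z = L0}) \<longlongrightarrow> 0) at_top)"
proof -
  obtain r a b c where "trapping_tube U dU ddU k1 k2 E0 L0 r a b c"
    using trapping_tube_exists by blast
  then interpret trapping_tube U dU ddU k1 k2 E0 L0 r a b c .
  show ?thesis
  proof (intro exI[of _ tube] exI[of _ c] conjI ballI allI impI)
    show "open tube"
      by (intro open_Collect_less continuous_intros)
    show "tube \<subseteq> phase"
    proof
      fix z
      assume "z \<in> tube"
      then have "infdist z level \<le> 3 * r"
        using r_pos by simp
      then show "z \<in> phase"
        by (rule tube_subset_phase)
    qed
    show "level \<subseteq> tube"
      using r_pos by auto
    show "c > 0"
      by (rule c_pos)
    show "compact sublevel"
      using compact_sublevel sublevel_eq by simp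
    show "V z = 0" if "z \<in> sublevel" "(V has_derivative (\<lambda>h. 0)) (at z)" for z
      using critical_point_in_sublevel that .
    show "\<exists>z. z 0 = z0 \<and> (\<forall>t\<ge>0. z t \<in> phase \<and> (z has_vector_derivative F (z t)) (at t within {0..}))"
      if z0: "z0 \<in> sublevel" for z0
    proof -
      obtain z where "z 0 = z0"
        "\<And>t. t \<ge> 0 \<Longrightarrow> z t \<in> phase \<and> (z has_vector_derivative F (z t)) (at t within {0..})"
        using trajectory_exists[OF z0] by blast
      then show ?thesis
        by blast
    qed
    show "z t \<in> sublevel"
      if "z 0 \<in> sublevel \<and>
        (\<forall>t\<ge>0. z t \<in> phase \<and> (z has_vector_derivative F (z t)) (at t within {0..}))" "t \<ge> 0"
      for z t
      using trajectory_converges(1)[of z] that by blast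
    show "((\<lambda>t. infdist (z t) {z \<in> phase. energy U z = E0 \<and> angmom z = L0}) \<longlongrightarrow> 0) at_top"
      if "z 0 \<in> sublevel \<and>
        (\<forall>t\<ge>0. z t \<in> phase \<and> (z has_vector_derivative F (z t)) (at t within {0..}))"
      for z
      using trajectory_converges(2)[of z] that unfolding level_eq by blast
  qed
qed

theorem theorem7:
  fixes U dU ddU :: "real \<Rightarrow> real"
    and x0 v0 :: "real^3" and k1 k2 :: real
  assumes U_deriv: "\<And>r. r > 0 \<Longrightarrow> (U has_real_derivative dU r) (at r)"
    and dU_deriv: "\<And>r. r > 0 \<Longrightarrow> (dU has_real_derivative ddU r) (at r)"
    and ddU_cont: "continuous_on {0<..} ddU"
    and x0: "x0 \<noteq> 0"
    and L0ne: "cross3 x0 v0 \<noteq> 0"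
    and k1: "k1 > 0" and k2: "k2 > 0"
    and cpt0: "compact {z \<in> phase.
                 lyap U k1 k2 (energy U (x0, v0)) (angmom (x0, v0)) z = 0}"
    and nocrit: "\<not> (\<exists>r>0. energy U (x0, v0) = r * dU r / 2 + U r \<and>
                        (norm (angmom (x0, v0)))\<^sup>2 = r ^ 3 * dU r)"
  shows "\<exists>N c. open N \<and> N \<subseteq> phase \<and>
           {z \<in> phase. lyap U k1 k2 (energy U (x0, v0)) (angmom (x0, v0)) z = 0} \<subseteq> N \<and>
           c > 0 \<and>
           compact {z \<in> N. lyap U k1 k2 (energy U (x0, v0)) (angmom (x0, v0)) z \<le> c} \<and>
           (\<forall>z \<in> {z \<in> N. lyap U k1 k2 (energy U (x0, v0)) (angmom (x0, v0)) z \<le> c}.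
              (lyap U k1 k2 (energy U (x0, v0)) (angmom (x0, v0)) has_derivative (\<lambda>h. 0)) (at z)
              \<longrightarrow> lyap U k1 k2 (energy U (x0, v0)) (angmom (x0, v0)) z = 0) \<and>
           (\<forall>z0 \<in> {z \<in> N. lyap U k1 k2 (energy U (x0, v0)) (angmom (x0, v0)) z \<le> c}.
              \<exists>z. z 0 = z0 \<and> (\<forall>t\<ge>0. z t \<in> phase \<and>
                 (z has_vector_derivative
                    ctrl_field U dU k1 k2 (energy U (x0, v0)) (angmom (x0, v0)) (z t))
                   (at t within {0..}))) \<and>
           (\<forall>z. z 0 \<in> {z \<in> N. lyap U k1 k2 (energy U (x0, v0)) (angmom (x0, v0)) z \<le> c} \<and>
                (\<forall>t\<ge>0. z t \<in> phase \<and>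
                   (z has_vector_derivative
                      ctrl_field U dU k1 k2 (energy U (x0, v0)) (angmom (x0, v0)) (z t))
                     (at t within {0..}))
              \<longrightarrow> (\<forall>t\<ge>0. z t \<in> {z \<in> N. lyap U k1 k2 (energy U (x0, v0)) (angmom (x0, v0)) z \<le> c}) \<and>
                  ((\<lambda>t. infdist (z t) {z \<in> phase. energy U z = energy U (x0, v0) \<and>
                                               angmom z = angmom (x0, v0)})
                     \<longlongrightarrow> 0) at_top)"
proof -
  let ?E0 = "energy U (x0, v0)" and ?L0 = "angmom (x0, v0)"
  have "(x0, v0) \<in> {z \<in> phase. lyap U k1 k2 ?E0 ?L0 z = 0}"
    using x0 by (simp add: phase_def lyap_def)
  moreover have "?L0 \<noteq> 0"
    using L0ne by (simp add: angmom_def)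
  ultimately interpret central_force_control U dU ddU k1 k2 ?E0 ?L0
    using U_deriv dU_deriv ddU_cont k1 k2 cpt0 nocrit by unfold_locales blast+
  show ?thesis
    by (rule stabilization)
qed

end
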